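(* Let $(\mathcal{S}_n)_{n\in\mathbb{N}}$ be a sequence of solid subsets of $\mathbb{L}^0_+$. Then $\bigcap_{n\in\mathbb{N}}\mathcal{S}_n=\{0\}$ holds if and only if $\bigcap_{n\in\mathbb{N}}\overline{\mathcal{S}_n}=\{0\}$, where $\overline{\mathcal{S}_n}$ is the closure of $\mathcal{S}_n$ in $\mathbb{L}^0$.
   Context: $(\Omega,\mathcal{F},\mathbb{P})$ is a probability space; $\mathbb{L}^0$ is the space of (equivalence classes modulo null sets of) real-valued random variables with the topology of convergence in probability; $\mathbb{L}^0_+$ its nonnegative elements. $\mathcal{S}\subseteq\mathbb{L}^0_+$ is solid if $Y\in\mathbb{L}^0_+$, $X\in\mathcal{S}$, $Y\le X$ imply $Y\in\mathcal{S}$. *)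

theory Defs
  imports "HOL-Probability.Probability"
begin

text \<open>Elements of L^0 are represented by real-valued measurable functions;
  a set of equivalence classes is represented by the set of all its representatives.\<close>

definition L0 :: "'a measure \<Rightarrow> ('a \<Rightarrow> real) set" where
  "L0 M = borel_measurable M"

definition L0_plus :: "'a measure \<Rightarrow> ('a \<Rightarrow> real) set" where
  "L0_plus M = {f \<in> L0 M. AE x in M. 0 \<le> f x}"

definition L0_zero :: "'a measure \<Rightarrow> ('a \<Rightarrow> real) set" where
  "L0_zero M = {f \<in> L0 M. AE x in M. f x = 0}"

definition solid :: "'a measure \<Rightarrow> ('a \<Rightarrow> real) set \<Rightarrow> bool" where
  "solid M S \<longleftrightarrow> S \<subseteq> L0_plus M \<and>
     (\<forall>X\<in>S. \<forall>Y\<in>L0_plus M. (AE x in M. Y x \<le> X x) \<longrightarrow> Y \<in> S)"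

text \<open>Standard metric inducing the topology of convergence in probability.\<close>
definition L0_dist :: "'a measure \<Rightarrow> ('a \<Rightarrow> real) \<Rightarrow> ('a \<Rightarrow> real) \<Rightarrow> real" where
  "L0_dist M f g = (\<integral>x. min \<bar>f x - g x\<bar> 1 \<partial>M)"

definition L0_closure :: "'a measure \<Rightarrow> ('a \<Rightarrow> real) set \<Rightarrow> ('a \<Rightarrow> real) set" where
  "L0_closure M S = {f \<in> L0 M. \<forall>e>0. \<exists>g\<in>S. L0_dist M f g < e}"

end

theory Submission
  imports Defs
begin

text \<open>A nonempty solid set contains the zero class, and each \<open>S n\<close> lies in its closure; since
  \<open>S n\<close> is nonempty as soon as its closure contains \<open>0\<close>, only the inclusion
  \<open>\<Inter>n. closure(S n) \<subseteq> {0}\<close> needs work. Let \<open>f\<close> lie in every closure and fix \<open>d > 0\<close>. Pick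
  \<open>g n \<in> S n\<close> so close to \<open>f\<close> that, outside a set \<open>U\<close> of probability at most \<open>\<epsilon>\<close>, all \<open>g n\<close> are
  within \<open>d/2\<close> of \<open>f\<close>. On \<open>B = {|f| > d} - U\<close> every \<open>g n\<close> exceeds \<open>d/2\<close>, so by solidity
  \<open>d/2 \<cdot> 1\<^sub>B\<close> lies in every \<open>S n\<close>, hence is zero: \<open>B\<close> is null and \<open>P(|f| > d) \<le> \<epsilon>\<close>.\<close>

lemma subset_L0_closure:
  assumes "S \<subseteq> L0 M"
  shows "S \<subseteq> L0_closure M S"
  using assms by (force simp: L0_closure_def L0_dist_def)

lemma L0_closure_empty [simp]: "L0_closure M {} = {}"
  by (auto simp: L0_closure_def intro: exI[of _ 1])

lemma solid_subset_L0: "solid M S \<Longrightarrow> S \<subseteq> L0 M"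
  by (auto simp: solid_def L0_plus_def)

lemma solidD:
  "solid M S \<Longrightarrow> X \<in> S \<Longrightarrow> Y \<in> L0_plus M \<Longrightarrow> AE x in M. Y x \<le> X x \<Longrightarrow> Y \<in> S"
  unfolding solid_def by blast

lemma solid_AE_nonneg: "solid M S \<Longrightarrow> X \<in> S \<Longrightarrow> AE x in M. 0 \<le> X x"
  unfolding solid_def L0_plus_def by blast

lemma L0_zero_subset_solid:
  assumes "solid M S" "S \<noteq> {}"
  shows "L0_zero M \<subseteq> S"
proof
  fix Y assume Y: "Y \<in> L0_zero M"
  obtain X where X: "X \<in> S" using assms(2) by blast
  show "Y \<in> S"
  proof (rule solidD[OF assms(1) X])
    show "Y \<in> L0_plus M" using Y by (auto simp: L0_zero_def L0_plus_def elim: AE_mp)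
    show "AE x in M. Y x \<le> X x"
      using solid_AE_nonneg[OF assms(1) X] Y by (auto simp: L0_zero_def elim: AE_mp)
  qed
qed

lemma solid_scaled_indicator:
  assumes "solid M S" "g \<in> S" "B \<in> sets M" "0 \<le> c"
    and "AE x in M. x \<in> B \<longrightarrow> c \<le> g x"
  shows "(\<lambda>x. c * indicator B x) \<in> S"
proof (rule solidD[OF assms(1,2)])
  have "(\<lambda>x. c * indicator B x) \<in> borel_measurable M"
    using assms(3) by measurable
  then show "(\<lambda>x. c * indicator B x) \<in> L0_plus M"
    using assms(4) by (simp add: L0_plus_def L0_def)
  show "AE x in M. c * indicator B x \<le> g x"
    using solid_AE_nonneg[OF assms(1,2)] assms(5)
    by eventually_elim (simp split: split_indicator)
qed

lemma null_sets_if_solids_bounded_below: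
  assumes "\<And>n. solid M (S n)" "(\<Inter>n. S n) = L0_zero M" "\<And>n. g n \<in> S n"
    and "B \<in> sets M" "0 < c" "\<And>n. AE x in M. x \<in> B \<longrightarrow> c \<le> g n x"
  shows "B \<in> null_sets M"
proof -
  have "(\<lambda>x. c * indicator B x) \<in> S n" for n
    using solid_scaled_indicator[OF assms(1,3,4) _ assms(6)] assms(5) by simp
  then have "(\<lambda>x. c * indicator B x) \<in> L0_zero M"
    using assms(2) by blast
  then have "AE x in M. c * indicator B x = 0"
    by (simp add: L0_zero_def)
  then have "AE x in M. x \<notin> B"
    by eventually_elim (use assms(5) in \<open>auto simp: indicator_def split: if_splits\<close>)
  then show ?thesis using AE_iff_null_sets[OF assms(4)] by blast
qed

lemma (in finite_measure) measure_dist_ge_le_L0_dist: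
  assumes "f \<in> borel_measurable M" "g \<in> borel_measurable M" "0 < c" "c \<le> 1"
  shows "measure M {x\<in>space M. c \<le> \<bar>f x - g x\<bar>} \<le> L0_dist M f g / c"
proof -
  have "integrable M (\<lambda>x. min \<bar>f x - g x\<bar> 1)"
    by (rule integrable_const_bound[where B=1]) (use assms in auto)
  then have "measure M {x\<in>space M. c \<le> min \<bar>f x - g x\<bar> 1} \<le> L0_dist M f g / c"
    unfolding L0_dist_def
    by (rule integral_Markov_inequality_measure[where A="space M"]) (use assms in auto)
  moreover have "{x\<in>space M. c \<le> min \<bar>f x - g x\<bar> 1} = {x\<in>space M. c \<le> \<bar>f x - g x\<bar>}"
    using assms(4) by auto
  ultimately show ?thesis by simp
qed

text \<open>The \<open>n\<close>-th approximation error is made smaller than \<open>c \<epsilon> / 2\<^sup>n\<^sup>+\<^sup>1\<close>, so that the Markov bounds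
  sum to \<open>\<epsilon>\<close>.\<close>

lemma (in finite_measure) L0_closures_uniform_approx:
  fixes S :: "nat \<Rightarrow> ('a \<Rightarrow> real) set"
  assumes "\<And>n. S n \<subseteq> L0 M" "f \<in> L0 M" "\<And>n. f \<in> L0_closure M (S n)"
    and "0 < c" "c \<le> 1" "0 < \<epsilon>"
  obtains g where "\<And>n. g n \<in> S n"
    and "measure M (\<Union>n. {x\<in>space M. c \<le> \<bar>f x - g n x\<bar>}) \<le> \<epsilon>"
proof -
  define e where "e n = c * (\<epsilon> * (1/2) ^ Suc n)" for n :: nat
  have "e n > 0" for n using assms(4,6) by (simp add: e_def)
  with assms(3) have "\<forall>n. \<exists>g. g \<in> S n \<and> L0_dist M f g < e n"
    unfolding L0_closure_def by blast
  then obtain g where g: "\<And>n. g n \<in> S n" and close: "\<And>n. L0_dist M f (g n) < e n"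
    by metis
  define E where "E n = {x\<in>space M. c \<le> \<bar>f x - g n x\<bar>}" for n
  have [measurable]: "f \<in> borel_measurable M" "g n \<in> borel_measurable M" for n
    using assms(1,2) g by (auto simp: L0_def)
  have E_sets: "E n \<in> sets M" for n unfolding E_def by measurable
  have E_le: "measure M (E n) \<le> \<epsilon> * (1/2) ^ Suc n" for n
  proof -
    have "measure M (E n) \<le> L0_dist M f (g n) / c"
      unfolding E_def by (rule measure_dist_ge_le_L0_dist) (use assms in auto)
    also have "\<dots> \<le> e n / c" using close[of n] assms(4) by (simp add: divide_right_mono)
    finally show ?thesis using assms(4) by (simp add: e_def)
  qed
  have geom: "(\<lambda>n. \<epsilon> * (1/2::real) ^ Suc n) sums \<epsilon>"
    using sums_mult[OF power_half_series, of \<epsilon>] by simp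
  have summable: "summable (\<lambda>n. measure M (E n))"
    by (rule summable_comparison_test[OF _ sums_summable[OF geom]]) (use E_le in auto)
  have "measure M (\<Union>n. E n) \<le> (\<Sum>n. measure M (E n))"
    by (rule finite_measure_subadditive_countably) (use E_sets summable in auto)
  also have "\<dots> \<le> \<epsilon>"
    using suminf_le[OF E_le summable sums_summable[OF geom]] sums_unique[OF geom] by simp
  finally show ?thesis using that g unfolding E_def by blast
qed

lemma (in finite_measure) measure_abs_gt_eq_0_if_in_all_closures:
  fixes S :: "nat \<Rightarrow> ('a \<Rightarrow> real) set"
  assumes solid: "\<And>n. solid M (S n)" and zero: "(\<Inter>n. S n) = L0_zero M"
    and f: "f \<in> L0 M" "\<And>n. f \<in> L0_closure M (S n)"
    and d: "0 < d" "d \<le> 1"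
  shows "measure M {x\<in>space M. d < \<bar>f x\<bar>} = 0"
proof -
  define A where "A = {x\<in>space M. d < \<bar>f x\<bar>}"
  have [measurable]: "f \<in> borel_measurable M" using f(1) by (simp add: L0_def)
  have A_sets: "A \<in> sets M" unfolding A_def by measurable
  have S_L0: "S n \<subseteq> L0 M" for n using solid by (rule solid_subset_L0)
  have "measure M A \<le> 0 + \<epsilon>" if "0 < \<epsilon>" for \<epsilon>
  proof -
    obtain g where g: "\<And>n. g n \<in> S n"
      and small: "measure M (\<Union>n. {x\<in>space M. d/2 \<le> \<bar>f x - g n x\<bar>}) \<le> \<epsilon>"
      using L0_closures_uniform_approx[where S=S and c="d/2", OF S_L0 f] d \<open>0 < \<epsilon>\<close>
      by auto
    define U where "U = (\<Union>n. {x\<in>space M. d/2 \<le> \<bar>f x - g n x\<bar>})"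
    have [measurable]: "g n \<in> borel_measurable M" for n
      using S_L0 g by (auto simp: L0_def)
    have U_sets: "U \<in> sets M" unfolding U_def by measurable
    have "A - U \<in> null_sets M"
    proof (rule null_sets_if_solids_bounded_below[OF solid zero g])
      show "AE x in M. x \<in> A - U \<longrightarrow> d/2 \<le> g n x" for n
        using solid_AE_nonneg[OF solid[of n] g[of n]]
      proof eventually_elim
        case (elim x)
        show ?case
        proof
          assume "x \<in> A - U"
          then have "d < \<bar>f x\<bar>" "\<bar>f x - g n x\<bar> < d/2"
            by (auto simp: A_def U_def not_le)
          with elim show "d/2 \<le> g n x" by linarith
        qed
      qed
    qed (use A_sets U_sets d in auto)
    then have null: "measure M (A - U) = 0" by (rule measure_eq_0_null_sets)
    have "measure M A \<le> measure M ((A - U) \<union> U)"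
      by (rule finite_measure_mono) (use A_sets U_sets in auto)
    also have "\<dots> \<le> measure M (A - U) + measure M U"
      using A_sets U_sets by (intro measure_Un_le) auto
    also have "\<dots> \<le> \<epsilon>" using null small by (simp add: U_def)
    finally show ?thesis by simp
  qed
  then have "measure M A \<le> 0" by (rule field_le_epsilon)
  then show ?thesis by (simp add: A_def antisym)
qed

lemma (in finite_measure) AE_eq_0_if_measure_abs_gt_eq_0:
  assumes "f \<in> borel_measurable M"
    and "\<And>k::nat. measure M {x\<in>space M. 1 / Suc k < \<bar>f x\<bar>} = 0"
  shows "AE x in M. f x = 0"
proof -
  have "AE x in M. \<bar>f x\<bar> \<le> 1 / Suc k" for k :: nat
    using assms by (subst AE_iff_measurable[OF _ refl])
      (auto simp: not_le emeasure_eq_measure)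
  then have "AE x in M. \<forall>k::nat. \<bar>f x\<bar> \<le> 1 / Suc k" by (simp add: AE_all_countable)
  then show ?thesis
  proof eventually_elim
    case (elim x)
    show "f x = 0"
    proof (rule ccontr)
      assume "f x \<noteq> 0"
      then obtain k :: nat where "1 / Suc k < \<bar>f x\<bar>"
        using reals_Archimedean[of "\<bar>f x\<bar>"] by (auto simp: inverse_eq_divide)
      with elim show False by (meson not_le)
    qed
  qed
qed

theorem lemmaA2:
  fixes M :: "'a measure" and S :: "nat \<Rightarrow> ('a \<Rightarrow> real) set"
  assumes "prob_space M"
    and "\<And>n. solid M (S n)"
  shows "(\<Inter>n. S n) = L0_zero M \<longleftrightarrow> (\<Inter>n. L0_closure M (S n)) = L0_zero M"
proof -
  interpret prob_space M by fact
  have in_closure: "(\<Inter>n. S n) \<subseteq> (\<Inter>n. L0_closure M (S n))"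
    using subset_L0_closure[OF solid_subset_L0[OF assms(2)]] by blast
  show ?thesis
  proof
    assume zero: "(\<Inter>n. S n) = L0_zero M"
    have "f \<in> L0_zero M" if f: "f \<in> (\<Inter>n. L0_closure M (S n))" for f
    proof -
      have "f \<in> L0 M" using f by (auto simp: L0_closure_def)
      then have "AE x in M. f x = 0"
        using measure_abs_gt_eq_0_if_in_all_closures[OF assms(2) zero] f
        by (intro AE_eq_0_if_measure_abs_gt_eq_0) (auto simp: L0_def)
      with \<open>f \<in> L0 M\<close> show ?thesis by (simp add: L0_zero_def)
    qed
    then have "(\<Inter>n. L0_closure M (S n)) \<subseteq> L0_zero M" by blast
    with in_closure zero show "(\<Inter>n. L0_closure M (S n)) = L0_zero M" by simp
  next
    assume zero: "(\<Inter>n. L0_closure M (S n)) = L0_zero M"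
    have "(\<lambda>x. 0) \<in> L0_zero M" by (simp add: L0_zero_def L0_def)
    then have "(\<lambda>x. 0) \<in> L0_closure M (S n)" for n using zero by blast
    then have "S n \<noteq> {}" for n by (metis L0_closure_empty empty_iff)
    then have "L0_zero M \<subseteq> (\<Inter>n. S n)"
      using L0_zero_subset_solid[OF assms(2)] by blast
    with in_closure zero show "(\<Inter>n. S n) = L0_zero M" by (intro subset_antisym) simp_all
  qed
qed

end
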